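(* Let $\mathcal{H}$ be an infinite-dimensional separable Hilbert space with orthonormal bases $\{e_n\}$, $\{f_n\}$, $\mathcal{D}_e=\mathrm{span}\{e_n\}$, $\mathcal{D}_f=\mathrm{span}\{f_n\}$, $\mathcal{D}_e^2=\mathrm{span}\{|e_k\rangle\langle e_\ell|\}$. Let $\mathcal{Q}$ be a completely positive map from $\mathcal{D}_e^2$ into sesquilinear forms on $\mathcal{D}_f$, represented as $\mathcal{Q}(\rho)=\sum_\alpha K_\alpha\rho K_\alpha^\dagger$ by a countable family of generalized operators $K_\alpha$. If $\mathcal{Q}$ is trace preserving (each $\mathcal{Q}(\rho)$ is given by a trace class operator with trace equal to $\mathrm{Tr}\,\rho$), then each $K_\alpha$ extends to a bounded operator in $\mathcal{B}(\mathcal{H})$, and $K_\alpha^\dagger=K_\alpha^*$.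
   Context: A generalized operator $K$ is a linear map from $\mathcal{D}_e$ into the conjugate algebraic dual of $\mathcal{D}_f$; write $\langle f|K|e\rangle$ for the value of $Ke$ at $f\in\mathcal{D}_f$, and $\langle e|K^\dagger|f\rangle=\langle f|K|e\rangle^*$. The representation $\mathcal{Q}(\rho)=\sum_\alpha K_\alpha\rho K_\alpha^\dagger$ means $\langle g|\mathcal{Q}(|\phi\rangle\langle\phi'|)|f\rangle=\sum_\alpha\langle g|K_\alpha|\phi\rangle\langle f|K_\alpha|\phi'\rangle^*$ for $\phi,\phi'\in\mathcal{D}_e$, $f,g\in\mathcal{D}_f$. Complete positivity: $\sum_{k,\ell}\langle\psi_k|\mathcal{Q}(|\phi_k\rangle\langle\phi_\ell|)|\psi_\ell\rangle\ge0$ for all finite families $\phi_k\in\mathcal{D}_e$, $\psi_k\in\mathcal{D}_f$. $K_\alpha^*$ denotes the Hilbert space adjoint of the bounded extension. *)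

theory Defs
  imports "HOL-Analysis.Analysis"
begin

text \<open>The separable infinite-dimensional Hilbert space is modelled as l2(nat) of complex
  sequences. Inner product is conjugate-linear in the FIRST argument (physics convention).\<close>

type_synonym vec = "nat \<Rightarrow> complex"

definition l2 :: "vec set" where
  "l2 = {x. summable (\<lambda>n. (cmod (x n))^2)}"

definition ip :: "vec \<Rightarrow> vec \<Rightarrow> complex" where
  "ip x y = (\<Sum>n. cnj (x n) * y n)"

definition l2norm :: "vec \<Rightarrow> real" where
  "l2norm x = sqrt (\<Sum>n. (cmod (x n))^2)"

definition is_ONB :: "(nat \<Rightarrow> vec) \<Rightarrow> bool" where
  "is_ONB u \<longleftrightarrow> (\<forall>n. u n \<in> l2)
     \<and> (\<forall>m n. ip (u m) (u n) = (if m = n then 1 else 0))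
     \<and> (\<forall>x\<in>l2. (\<forall>n. ip (u n) x = 0) \<longrightarrow> x = (\<lambda>_. 0))"

definition fspan :: "(nat \<Rightarrow> vec) \<Rightarrow> vec set" where
  "fspan u = {x. \<exists>(c::nat \<Rightarrow> complex) N. x = (\<lambda>i. \<Sum>n<N. c n * u n i)}"

text \<open>Generalized operator K: D_e -> conjugate algebraic dual of D_f, represented by
  its values: K phi g = <g|K|phi>, linear in phi, conjugate-linear in g.\<close>
definition gen_op :: "(nat \<Rightarrow> vec) \<Rightarrow> (nat \<Rightarrow> vec) \<Rightarrow> (vec \<Rightarrow> vec \<Rightarrow> complex) \<Rightarrow> bool" where
  "gen_op e f K \<longleftrightarrow>
     (\<forall>\<phi>\<in>fspan e. \<forall>\<psi>\<in>fspan e. \<forall>g\<in>fspan f. \<forall>a b.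
         K (\<lambda>i. a * \<phi> i + b * \<psi> i) g = a * K \<phi> g + b * K \<psi> g)
   \<and> (\<forall>\<phi>\<in>fspan e. \<forall>g\<in>fspan f. \<forall>h\<in>fspan f. \<forall>a b.
         K \<phi> (\<lambda>i. a * g i + b * h i) = cnj a * K \<phi> g + cnj b * K \<phi> h)"

text \<open>Elements of D_e^2 = span{|e_k><e_l|} are represented by their finitely supported
  coefficient matrices c, rho = sum c k l |e_k><e_l|.\<close>
definition fin_supp_mat :: "(nat \<Rightarrow> nat \<Rightarrow> complex) \<Rightarrow> bool" where
  "fin_supp_mat c \<longleftrightarrow> finite {(k, l). c k l \<noteq> 0}"

text \<open>Coefficient matrix of |phi><phi'| in the basis e.\<close>
definition rank1 :: "(nat \<Rightarrow> vec) \<Rightarrow> vec \<Rightarrow> vec \<Rightarrow> (nat \<Rightarrow> nat \<Rightarrow> complex)" where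
  "rank1 e \<phi> \<phi>' = (\<lambda>k l. ip (e k) \<phi> * cnj (ip (e l) \<phi>'))"

definition mat_trace :: "(nat \<Rightarrow> nat \<Rightarrow> complex) \<Rightarrow> complex" where
  "mat_trace c = infsum (\<lambda>k. c k k) UNIV"

definition bdd_op :: "(vec \<Rightarrow> vec) \<Rightarrow> bool" where
  "bdd_op T \<longleftrightarrow> (\<forall>x\<in>l2. T x \<in> l2)
     \<and> (\<forall>x\<in>l2. \<forall>y\<in>l2. \<forall>a b. T (\<lambda>i. a * x i + b * y i) = (\<lambda>i. a * T x i + b * T y i))
     \<and> (\<exists>C. \<forall>x\<in>l2. l2norm (T x) \<le> C * l2norm x)"

definition orthonormal_fam :: "nat \<Rightarrow> (nat \<Rightarrow> vec) \<Rightarrow> bool" where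
  "orthonormal_fam N u \<longleftrightarrow> (\<forall>i<N. u i \<in> l2)
     \<and> (\<forall>i<N. \<forall>j<N. ip (u i) (u j) = (if i = j then 1 else 0))"

definition trace_class :: "(vec \<Rightarrow> vec) \<Rightarrow> bool" where
  "trace_class T \<longleftrightarrow> bdd_op T \<and>
     (\<exists>B. \<forall>N u v. orthonormal_fam N u \<and> orthonormal_fam N v \<longrightarrow>
            (\<Sum>i<N. cmod (ip (v i) (T (u i)))) \<le> B)"

definition op_trace :: "(nat \<Rightarrow> vec) \<Rightarrow> (vec \<Rightarrow> vec) \<Rightarrow> complex" where
  "op_trace u T = (\<Sum>n. ip (u n) (T (u n)))"

end

theory Submission
  imports Defs
begin

text \<open>Fix \<open>\<alpha>\<close> and \<open>\<phi> = \<Sum>\<^sub>n c\<^sub>n e\<^sub>n\<close>, and let \<open>\<rho> = |\<phi>\<rangle>\<langle>\<phi>|\<close>. By the Kraus representation,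
  \<open>\<langle>g, Q(\<rho>) g\<rangle> = \<Sum>\<^sub>\<beta> |\<langle>g|K\<^sub>\<beta>|\<phi>\<rangle>|\<^sup>2\<close>, so the trace class operator \<open>Q(\<rho>)\<close> is positive
  and \<open>\<Sum>\<^sub>m |\<langle>f\<^sub>m|K\<^sub>\<alpha>|\<phi>\<rangle>|\<^sup>2\<close> is bounded by its diagonal in the basis \<open>f\<close>, hence by its
  trace \<open>Tr \<rho> = \<Sum>\<^sub>n |c\<^sub>n|\<^sup>2\<close>. So the matrix \<open>\<langle>f\<^sub>m|K\<^sub>\<alpha>|e\<^sub>n\<rangle>\<close> is a contraction on finitely
  supported vectors; then so is its conjugate transpose, and the two matrices define mutually
  adjoint bounded operators on \<open>\<ell>\<^sup>2\<close> which extend \<open>K\<^sub>\<alpha>\<close> and \<open>K\<^sub>\<alpha>\<^sup>\<dagger>\<close>.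
  Beyond the representation and trace preservation, no property of \<open>Q\<close> is used.\<close>

lemma cnj_mult_self: "cnj z * z = complex_of_real (cmod z) ^ 2"
  using complex_norm_square[of z] by (simp add: mult.commute)

lemma mult_cnj_self: "z * cnj z = complex_of_real (cmod z) ^ 2"
  using complex_norm_square[of z] by simp

lemma l2_zero: "(\<lambda>_. 0) \<in> l2"
  by (simp add: l2_def)

lemma l2_add:
  assumes "x \<in> l2" "y \<in> l2"
  shows "(\<lambda>i. x i + y i) \<in> l2"
proof -
  have "cmod (x i + y i) ^ 2 \<le> 2 * cmod (x i) ^ 2 + 2 * cmod (y i) ^ 2" for i
  proof -
    have "cmod (x i + y i) ^ 2 \<le> (cmod (x i) + cmod (y i)) ^ 2"
      by (simp add: norm_triangle_ineq power_mono)
    also have "\<dots> \<le> 2 * cmod (x i) ^ 2 + 2 * cmod (y i) ^ 2"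
      using zero_le_power2[of "cmod (x i) - cmod (y i)"]
      unfolding power2_sum power2_diff by linarith
    finally show ?thesis .
  qed
  moreover have "summable (\<lambda>i. 2 * cmod (x i) ^ 2 + 2 * cmod (y i) ^ 2)"
    using assms by (intro summable_add summable_mult) (auto simp: l2_def)
  ultimately show ?thesis
    unfolding l2_def by (auto intro: summable_comparison_test')
qed

lemma l2_scale:
  assumes "x \<in> l2"
  shows "(\<lambda>i. a * x i) \<in> l2"
proof -
  have "summable (\<lambda>i. cmod a ^ 2 * cmod (x i) ^ 2)"
    using assms by (intro summable_mult) (auto simp: l2_def)
  then show ?thesis
    by (simp add: l2_def norm_mult power_mult_distrib)
qed

lemma l2_diff:
  assumes "x \<in> l2" "y \<in> l2"
  shows "(\<lambda>i. x i - y i) \<in> l2"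
  using l2_add[OF assms(1) l2_scale[OF assms(2), of "-1"]] by simp

lemma summable_ip:
  assumes "x \<in> l2" "y \<in> l2"
  shows "summable (\<lambda>n. cnj (x n) * y n)"
proof (rule summable_comparison_test')
  show "norm (cnj (x n) * y n) \<le> (cmod (x n) ^ 2 + cmod (y n) ^ 2) / 2" for n
    using zero_le_power2[of "cmod (x n) - cmod (y n)"]
    by (simp add: norm_mult power2_eq_square algebra_simps)
  show "summable (\<lambda>n. (cmod (x n) ^ 2 + cmod (y n) ^ 2) / 2)"
    using assms by (intro summable_divide summable_add) (auto simp: l2_def)
qed

lemma ip_self:
  assumes "x \<in> l2"
  shows "ip x x = of_real (\<Sum>n. cmod (x n) ^ 2)"
proof -
  have "(\<lambda>n. cmod (x n) ^ 2) sums (\<Sum>n. cmod (x n) ^ 2)"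
    using assms by (auto simp: l2_def)
  then have "(\<lambda>n. complex_of_real (cmod (x n) ^ 2)) sums of_real (\<Sum>n. cmod (x n) ^ 2)"
    by (subst sums_of_real_iff)
  moreover have "complex_of_real (cmod (x n) ^ 2) = cnj (x n) * x n" for n
    using complex_norm_square[of "x n"] by (simp only: mult.commute)
  ultimately show ?thesis
    unfolding ip_def by (simp add: sums_iff)
qed

lemma ip_add_left:
  assumes "x \<in> l2" "y \<in> l2" "z \<in> l2"
  shows "ip (\<lambda>i. x i + y i) z = ip x z + ip y z"
  unfolding ip_def using summable_ip[OF assms(1,3)] summable_ip[OF assms(2,3)]
  by (simp add: distrib_right suminf_add)

lemma ip_add_right:
  assumes "x \<in> l2" "y \<in> l2" "z \<in> l2"
  shows "ip z (\<lambda>i. x i + y i) = ip z x + ip z y"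
  unfolding ip_def using summable_ip[OF assms(3,1)] summable_ip[OF assms(3,2)]
  by (simp add: distrib_left suminf_add)

lemma ip_scale_right:
  assumes "x \<in> l2" "y \<in> l2"
  shows "ip x (\<lambda>i. a * y i) = a * ip x y"
  unfolding ip_def
  by (subst suminf_mult[OF summable_ip[OF assms], symmetric]) (simp add: algebra_simps)

lemma ip_cnj:
  assumes "x \<in> l2" "y \<in> l2"
  shows "ip y x = cnj (ip x y)"
proof -
  have "(\<lambda>n. cnj (x n) * y n) sums ip x y"
    unfolding ip_def using summable_ip[OF assms] by auto
  then have "(\<lambda>n. cnj (cnj (x n) * y n)) sums cnj (ip x y)"
    by (subst sums_cnj)
  then show ?thesis
    unfolding ip_def by (simp add: sums_iff mult.commute)
qed

lemma ip_scale_left: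
  assumes "x \<in> l2" "y \<in> l2"
  shows "ip (\<lambda>i. a * x i) y = cnj a * ip x y"
  using ip_cnj[OF assms(2) l2_scale[OF assms(1)], of a] ip_scale_right[OF assms(2,1), of a]
    ip_cnj[OF assms(2,1)]
  by simp


section \<open>The Hilbert space \<open>\<ell>\<^sup>2\<close>\<close>

typedef ell2 = l2
  using l2_zero by blast

declare Rep_ell2_inverse [simp] Abs_ell2_inverse [simp]

instantiation ell2 :: real_inner
begin

definition "0 = Abs_ell2 (\<lambda>_. 0)"
definition "x + y = Abs_ell2 (\<lambda>i. Rep_ell2 x i + Rep_ell2 y i)"
definition "x - y = Abs_ell2 (\<lambda>i. Rep_ell2 x i - Rep_ell2 y i)"
definition "- x = Abs_ell2 (\<lambda>i. - Rep_ell2 x i)"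
definition "r *\<^sub>R x = Abs_ell2 (\<lambda>i. complex_of_real r * Rep_ell2 x i)"
definition "inner x y = Re (ip (Rep_ell2 x) (Rep_ell2 y))"
definition "norm (x :: ell2) = sqrt (inner x x)"
definition "sgn (x :: ell2) = inverse (norm x) *\<^sub>R x"
definition "dist (x :: ell2) y = norm (x - y)"
definition "uniformity = (INF e\<in>{0<..}. principal {(x :: ell2, y). dist x y < e})"
definition "open (U :: ell2 set) = (\<forall>x\<in>U. eventually (\<lambda>(x', y). x' = x \<longrightarrow> y \<in> U) uniformity)"

lemma Rep_ell2_zero: "Rep_ell2 0 = (\<lambda>_. 0)"
  by (simp add: zero_ell2_def l2_zero)

lemma Rep_ell2_add: "Rep_ell2 (x + y) = (\<lambda>i. Rep_ell2 x i + Rep_ell2 y i)"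
  by (simp add: plus_ell2_def l2_add Rep_ell2)

lemma Rep_ell2_diff: "Rep_ell2 (x - y) = (\<lambda>i. Rep_ell2 x i - Rep_ell2 y i)"
  by (simp add: minus_ell2_def l2_diff Rep_ell2)

lemma Rep_ell2_uminus: "Rep_ell2 (- x) = (\<lambda>i. - Rep_ell2 x i)"
  using l2_scale[OF Rep_ell2[of x], of "-1"] by (simp add: uminus_ell2_def)

lemma Rep_ell2_scaleR: "Rep_ell2 (r *\<^sub>R x) = (\<lambda>i. complex_of_real r * Rep_ell2 x i)"
  by (simp add: scaleR_ell2_def l2_scale Rep_ell2)

lemma summable_norm_Rep_ell2_sq: "summable (\<lambda>n. cmod (Rep_ell2 x n) ^ 2)"
  using Rep_ell2[of x] by (simp add: l2_def)

instance
proof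
  fix x y z :: ell2 and a b :: real and U :: "ell2 set"
  show "x + y + z = x + (y + z)" "x + y = y + x" "0 + x = x" "- x + x = 0" "x - y = x + - y"
    by (simp_all add: Rep_ell2_inject[symmetric] Rep_ell2_add Rep_ell2_zero Rep_ell2_uminus
        Rep_ell2_diff add_ac)
  show "a *\<^sub>R (x + y) = a *\<^sub>R x + a *\<^sub>R y" "(a + b) *\<^sub>R x = a *\<^sub>R x + b *\<^sub>R x"
    "a *\<^sub>R b *\<^sub>R x = (a * b) *\<^sub>R x" "1 *\<^sub>R x = x"
    by (simp_all add: Rep_ell2_inject[symmetric] Rep_ell2_add Rep_ell2_scaleR algebra_simps)
  show "sgn x = inverse (norm x) *\<^sub>R x" "dist x y = norm (x - y)"
    "uniformity = (INF e\<in>{0<..}. principal {(x :: ell2, y). dist x y < e})"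
    "open U = (\<forall>x\<in>U. \<forall>\<^sub>F (x', y) in uniformity. x' = x \<longrightarrow> y \<in> U)"
    "norm x = sqrt (inner x x)"
    by (simp_all add: sgn_ell2_def dist_ell2_def uniformity_ell2_def open_ell2_def norm_ell2_def)
  show "inner x y = inner y x"
    unfolding inner_ell2_def using ip_cnj[OF Rep_ell2 Rep_ell2, of x y] by simp
  show "inner (x + y) z = inner x z + inner y z"
    by (simp add: inner_ell2_def Rep_ell2_add ip_add_left Rep_ell2)
  show "inner (a *\<^sub>R x) y = a * inner x y"
    by (simp add: inner_ell2_def Rep_ell2_scaleR ip_scale_left Rep_ell2)
  have sum_sq: "inner x x = (\<Sum>n. cmod (Rep_ell2 x n) ^ 2)"
    by (simp add: inner_ell2_def ip_self Rep_ell2)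
  show "0 \<le> inner x x"
    by (simp add: sum_sq suminf_nonneg[OF summable_norm_Rep_ell2_sq])
  show "inner x x = 0 \<longleftrightarrow> x = 0"
    by (simp add: sum_sq suminf_eq_zero_iff[OF summable_norm_Rep_ell2_sq] Rep_ell2_inject[symmetric]
        Rep_ell2_zero fun_eq_iff)
qed

end

lemma ell2_eqI: "(\<And>i. Rep_ell2 x i = Rep_ell2 y i) \<Longrightarrow> x = y"
  by (simp add: Rep_ell2_inject[symmetric] fun_eq_iff)

lemma norm_ell2_sq: "norm x ^ 2 = (\<Sum>n. cmod (Rep_ell2 x n) ^ 2)"
  by (simp add: dot_square_norm[symmetric] inner_ell2_def ip_self Rep_ell2)

lemma norm_ell2_l2norm: "norm x = l2norm (Rep_ell2 x)"
  by (simp add: l2norm_def norm_ell2_def inner_ell2_def ip_self Rep_ell2)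

lemma sum_norm_Rep_ell2_sq_le: "(\<Sum>i\<in>I. cmod (Rep_ell2 x i) ^ 2) \<le> norm x ^ 2"
  if "finite I"
  using sum_le_suminf[OF summable_norm_Rep_ell2_sq that] by (simp add: norm_ell2_sq)

lemma norm_Rep_ell2_le: "cmod (Rep_ell2 x i) \<le> norm x"
  using sum_norm_Rep_ell2_sq_le[of "{i}" x] by (simp add: power2_le_iff_abs_le)

text \<open>The complex structure, which the type class \<open>real_inner\<close> cannot record.\<close>

definition cscale :: "complex \<Rightarrow> ell2 \<Rightarrow> ell2" where
  "cscale a x = Abs_ell2 (\<lambda>i. a * Rep_ell2 x i)"

definition cinner :: "ell2 \<Rightarrow> ell2 \<Rightarrow> complex" where
  "cinner x y = ip (Rep_ell2 x) (Rep_ell2 y)"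

lemma Rep_ell2_cscale: "Rep_ell2 (cscale a x) = (\<lambda>i. a * Rep_ell2 x i)"
  by (simp add: cscale_def l2_scale Rep_ell2)

lemma cscale_add: "cscale a (x + y) = cscale a x + cscale a y"
  by (rule ell2_eqI) (simp add: Rep_ell2_cscale Rep_ell2_add algebra_simps)

lemma cscale_add_left: "cscale (a + b) x = cscale a x + cscale b x"
  by (rule ell2_eqI) (simp add: Rep_ell2_cscale Rep_ell2_add algebra_simps)

lemma cscale_cscale: "cscale a (cscale b x) = cscale (a * b) x"
  by (rule ell2_eqI) (simp add: Rep_ell2_cscale algebra_simps)

lemma cscale_one [simp]: "cscale 1 x = x"
  by (rule ell2_eqI) (simp add: Rep_ell2_cscale)

lemma cscale_zero [simp]: "cscale 0 x = 0"
  by (rule ell2_eqI) (simp add: Rep_ell2_cscale Rep_ell2_zero)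

lemma scaleR_ell2_eq_cscale: "r *\<^sub>R x = cscale (complex_of_real r) x"
  by (rule ell2_eqI) (simp add: Rep_ell2_cscale Rep_ell2_scaleR)

lemma cscale_scaleR_left: "cscale (r *\<^sub>R a) x = r *\<^sub>R cscale a x"
  by (rule ell2_eqI) (simp add: Rep_ell2_cscale Rep_ell2_scaleR scaleR_conv_of_real)

lemma cscale_scaleR_right: "cscale a (r *\<^sub>R x) = r *\<^sub>R cscale a x"
  by (rule ell2_eqI) (simp add: Rep_ell2_cscale Rep_ell2_scaleR)

lemma cinner_add_left: "cinner (x + y) z = cinner x z + cinner y z"
  by (simp add: cinner_def Rep_ell2_add ip_add_left Rep_ell2)

lemma cinner_add_right: "cinner z (x + y) = cinner z x + cinner z y"
  by (simp add: cinner_def Rep_ell2_add ip_add_right Rep_ell2)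

lemma cinner_cscale_left: "cinner (cscale a x) y = cnj a * cinner x y"
  by (simp add: cinner_def Rep_ell2_cscale ip_scale_left Rep_ell2)

lemma cinner_cscale_right: "cinner x (cscale a y) = a * cinner x y"
  by (simp add: cinner_def Rep_ell2_cscale ip_scale_right Rep_ell2)

lemma cinner_commute: "cinner y x = cnj (cinner x y)"
  unfolding cinner_def by (rule ip_cnj[OF Rep_ell2 Rep_ell2])

lemma cinner_diff_left: "cinner (x - y) z = cinner x z - cinner y z"
  using cinner_add_left[of "x - y" y z] by simp

lemma cinner_diff_right: "cinner z (x - y) = cinner z x - cinner z y"
  using cinner_add_right[of z "x - y" y] by simp

lemma cinner_zero_left [simp]: "cinner 0 x = 0"
  by (simp add: cinner_def Rep_ell2_zero ip_def)

lemma cinner_zero_right [simp]: "cinner x 0 = 0"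
  by (simp add: cinner_def Rep_ell2_zero ip_def)

lemma cinner_sum_left: "cinner (sum f F) z = (\<Sum>i\<in>F. cinner (f i) z)"
  by (induction F rule: infinite_finite_induct) (auto simp: cinner_add_left)

lemma cinner_sum_right: "cinner z (sum f F) = (\<Sum>i\<in>F. cinner z (f i))"
  by (induction F rule: infinite_finite_induct) (auto simp: cinner_add_right)

lemma cinner_self: "cinner x x = complex_of_real (norm x ^ 2)"
  by (simp add: cinner_def ip_self Rep_ell2 norm_ell2_sq)

lemma norm_sq_eq_Re_cinner: "norm x ^ 2 = Re (cinner x x)"
  by (simp add: cinner_self)

lemma norm_cscale: "norm (cscale a x) = cmod a * norm x"
proof -
  have "norm (cscale a x) ^ 2 = (\<Sum>n. cmod a ^ 2 * cmod (Rep_ell2 x n) ^ 2)"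
    by (simp add: norm_ell2_sq Rep_ell2_cscale norm_mult power_mult_distrib)
  also have "\<dots> = (cmod a * norm x) ^ 2"
    by (simp add: suminf_mult[OF summable_norm_Rep_ell2_sq] norm_ell2_sq power_mult_distrib)
  finally show ?thesis
    by simp
qed

lemma norm_cinner_le: "cmod (cinner x y) \<le> norm x * norm y"
proof (cases "cinner x y = 0")
  case False
  define w where "w = cnj (cinner x y) / complex_of_real (cmod (cinner x y))"
  have "w * cinner x y = cnj (cinner x y) * cinner x y / complex_of_real (cmod (cinner x y))"
    by (simp add: w_def)
  also have "\<dots> = complex_of_real (cmod (cinner x y) ^ 2) / complex_of_real (cmod (cinner x y))"
    by (simp only: complex_norm_square mult.commute)
  also have "\<dots> = complex_of_real (cmod (cinner x y))"
    using False by (simp add: power2_eq_square)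
  finally have "w * cinner x y = complex_of_real (cmod (cinner x y))" .
  then have "cmod (cinner x y) = inner x (cscale w y)"
    by (simp add: inner_ell2_def cinner_def[symmetric] cinner_cscale_right)
  also have "\<dots> \<le> norm x * norm (cscale w y)"
    by (rule Cauchy_Schwarz_ineq2[THEN order_trans[OF abs_ge_self]])
  also have "\<dots> = norm x * norm y"
    using False by (simp add: norm_cscale w_def norm_divide)
  finally show ?thesis .
qed simp

lemma bounded_bilinear_cinner: "bounded_bilinear cinner"
  by (rule bounded_bilinear.intro)
    (auto simp: cinner_add_left cinner_add_right scaleR_ell2_eq_cscale cinner_cscale_left
      cinner_cscale_right scaleR_conv_of_real intro!: exI[of _ 1] norm_cinner_le)

lemma bounded_bilinear_cscale: "bounded_bilinear cscale"
  by (rule bounded_bilinear.intro)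
    (auto simp: cscale_add cscale_add_left cscale_scaleR_left cscale_scaleR_right norm_cscale
      intro!: exI[of _ 1])

lemma sums_cinner_right: "f sums s \<Longrightarrow> (\<lambda>n. cinner z (f n)) sums cinner z s"
  by (rule bounded_linear.sums[OF bounded_bilinear.bounded_linear_right[OF bounded_bilinear_cinner]])

lemma sums_cinner_left: "f sums s \<Longrightarrow> (\<lambda>n. cinner (f n) z) sums cinner s z"
  by (rule bounded_linear.sums[OF bounded_bilinear.bounded_linear_left[OF bounded_bilinear_cinner]])

lemma sums_cscale: "f sums s \<Longrightarrow> (\<lambda>n. cscale a (f n)) sums cscale a s"
  by (rule bounded_linear.sums[OF bounded_bilinear.bounded_linear_right[OF bounded_bilinear_cscale]])

text \<open>A Cauchy sequence converges coordinatewise, and Fatou-type bounds on the partial sums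
  turn this into convergence in norm.\<close>

lemma Cauchy_ell2_tail_bound:
  assumes "Cauchy X" and z: "\<And>i. (\<lambda>n. Rep_ell2 (X n) i) \<longlonglongrightarrow> z i" and "0 < e"
  shows "\<exists>M. \<forall>m\<ge>M. (\<lambda>i. Rep_ell2 (X m) i - z i) \<in> l2
    \<and> (\<Sum>i. cmod (Rep_ell2 (X m) i - z i) ^ 2) \<le> e ^ 2"
proof -
  obtain M where M: "\<forall>m\<ge>M. \<forall>n\<ge>M. norm (X m - X n) < e"
    using CauchyD[OF assms(1,3)] by blast
  have partial: "(\<Sum>i<I. cmod (Rep_ell2 (X m) i - z i) ^ 2) \<le> e ^ 2" if "m \<ge> M" for m I
  proof (rule LIMSEQ_le_const2)
    show "(\<lambda>n. \<Sum>i<I. cmod (Rep_ell2 (X m - X n) i) ^ 2)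
        \<longlonglongrightarrow> (\<Sum>i<I. cmod (Rep_ell2 (X m) i - z i) ^ 2)"
      unfolding Rep_ell2_diff by (intro tendsto_intros z)
    show "\<exists>N. \<forall>n\<ge>N. (\<Sum>i<I. cmod (Rep_ell2 (X m - X n) i) ^ 2) \<le> e ^ 2"
    proof (intro exI allI impI)
      fix n assume "n \<ge> M"
      then have "norm (X m - X n) ^ 2 \<le> e ^ 2"
        using M \<open>m \<ge> M\<close> by (intro power_mono) (auto intro: less_imp_le)
      then show "(\<Sum>i<I. cmod (Rep_ell2 (X m - X n) i) ^ 2) \<le> e ^ 2"
        using sum_norm_Rep_ell2_sq_le[of "{..<I}"] by (meson finite_lessThan order_trans)
    qed
  qed
  have summable: "summable (\<lambda>i. cmod (Rep_ell2 (X m) i - z i) ^ 2)" if "m \<ge> M" for m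
    by (rule summableI_nonneg_bounded[where x="e ^ 2"]) (use partial[OF that] in auto)
  show ?thesis
  proof (intro exI allI impI conjI)
    fix m assume "m \<ge> M"
    show "(\<lambda>i. Rep_ell2 (X m) i - z i) \<in> l2"
      using summable[OF \<open>m \<ge> M\<close>] by (simp add: l2_def)
    show "(\<Sum>i. cmod (Rep_ell2 (X m) i - z i) ^ 2) \<le> e ^ 2"
      by (rule suminf_le_const[OF summable partial]) (use \<open>m \<ge> M\<close> in auto)
  qed
qed

lemma Cauchy_Rep_ell2:
  assumes "Cauchy X"
  shows "Cauchy (\<lambda>n. Rep_ell2 (X n) i)"
proof (rule CauchyI)
  fix e :: real assume "0 < e"
  then obtain M where M: "\<forall>m\<ge>M. \<forall>n\<ge>M. norm (X m - X n) < e"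
    using CauchyD[OF assms] by blast
  have "norm (Rep_ell2 (X m) i - Rep_ell2 (X n) i) < e" if "m \<ge> M" "n \<ge> M" for m n
  proof -
    have "norm (X m - X n) < e"
      using M that by blast
    then have "cmod (Rep_ell2 (X m - X n) i) < e"
      by (rule le_less_trans[OF norm_Rep_ell2_le])
    then show ?thesis
      by (simp add: Rep_ell2_diff)
  qed
  then show "\<exists>M. \<forall>m\<ge>M. \<forall>n\<ge>M. norm (Rep_ell2 (X m) i - Rep_ell2 (X n) i) < e"
    by blast
qed

instance ell2 :: banach
proof
  fix X :: "nat \<Rightarrow> ell2"
  assume X: "Cauchy X"
  have "convergent (\<lambda>n. Rep_ell2 (X n) i)" for i
    by (rule Cauchy_convergent[OF Cauchy_Rep_ell2[OF X]])
  define z where "z i = lim (\<lambda>n. Rep_ell2 (X n) i)" for i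
  have z: "\<And>i. (\<lambda>n. Rep_ell2 (X n) i) \<longlonglongrightarrow> z i"
    unfolding z_def using \<open>\<And>i. convergent (\<lambda>n. Rep_ell2 (X n) i)\<close>
    by (simp add: convergent_LIMSEQ_iff)
  obtain M1 where "(\<lambda>i. Rep_ell2 (X M1) i - z i) \<in> l2"
    using Cauchy_ell2_tail_bound[OF X z zero_less_one] by auto
  from l2_diff[OF Rep_ell2[of "X M1"] this] have z_l2: "z \<in> l2"
    by simp
  have "X \<longlonglongrightarrow> Abs_ell2 z"
  proof (rule LIMSEQ_I)
    fix r :: real assume r: "0 < r"
    then have "0 < r / 2"
      by simp
    then obtain M where M: "\<And>m. m \<ge> M \<Longrightarrow> (\<Sum>i. cmod (Rep_ell2 (X m) i - z i) ^ 2) \<le> (r / 2) ^ 2"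
      using Cauchy_ell2_tail_bound[OF X z] by meson
    have "norm (X n - Abs_ell2 z) < r" if "n \<ge> M" for n
    proof -
      have "norm (X n - Abs_ell2 z) ^ 2 \<le> (r / 2) ^ 2"
        using M[OF that] by (simp add: norm_ell2_sq Rep_ell2_diff z_l2)
      then have "norm (X n - Abs_ell2 z) \<le> r / 2"
        using r by (simp add: power2_le_iff_abs_le)
      with r show ?thesis
        by simp
    qed
    then show "\<exists>M. \<forall>n\<ge>M. norm (X n - Abs_ell2 z) < r"
      by blast
  qed
  then show "convergent X"
    by (auto simp: convergent_def)
qed


section \<open>Orthonormal bases\<close>

lemma summable_if_norm_sum_sq_le:
  fixes w :: "nat \<Rightarrow> 'a::banach"
  assumes "summable b" and bound: "\<And>m n. norm (\<Sum>k\<in>{m..<n}. w k) ^ 2 \<le> (\<Sum>k\<in>{m..<n}. b k)"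
  shows "summable w"
  unfolding summable_Cauchy
proof (intro allI impI)
  fix e :: real assume e: "0 < e"
  obtain N where N: "\<forall>m\<ge>N. \<forall>n. norm (\<Sum>k\<in>{m..<n}. b k) < e ^ 2"
    using assms(1)[unfolded summable_Cauchy] e by (meson zero_less_power)
  have "norm (\<Sum>k\<in>{m..<n}. w k) < e" if "N \<le> m" for m n
  proof -
    have "norm (\<Sum>k\<in>{m..<n}. w k) ^ 2 \<le> norm (\<Sum>k\<in>{m..<n}. b k)"
      using bound[of m n] by simp
    also have "\<dots> < e ^ 2"
      using N that by blast
    finally show ?thesis
      by (rule power_less_imp_less_base) (use e in auto)
  qed
  then show "\<exists>N. \<forall>m\<ge>N. \<forall>n. norm (\<Sum>k\<in>{m..<n}. w k) < e"
    by blast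
qed

definition onb :: "(nat \<Rightarrow> ell2) \<Rightarrow> bool" where
  "onb u \<longleftrightarrow> (\<forall>m n. cinner (u m) (u n) = (if m = n then 1 else 0))
    \<and> (\<forall>x. (\<forall>n. cinner (u n) x = 0) \<longrightarrow> x = 0)"

lemma onb_Abs_ell2:
  assumes "is_ONB e"
  shows "onb (\<lambda>n. Abs_ell2 (e n))"
  unfolding onb_def
proof (intro conjI allI impI)
  have e_l2: "e n \<in> l2" for n
    using assms by (simp add: is_ONB_def)
  show "cinner (Abs_ell2 (e m)) (Abs_ell2 (e n)) = (if m = n then 1 else 0)" for m n
    using assms by (simp add: cinner_def e_l2 is_ONB_def)
  fix x assume "\<forall>n. cinner (Abs_ell2 (e n)) x = 0"
  then have "Rep_ell2 x = (\<lambda>_. 0)"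
    using assms Rep_ell2[of x] by (simp add: cinner_def e_l2 is_ONB_def)
  then show "x = 0"
    by (simp add: Rep_ell2_inject[symmetric] Rep_ell2_zero)
qed

context
  fixes u :: "nat \<Rightarrow> ell2"
  assumes u: "onb u"
begin

lemma cinner_onb: "cinner (u m) (u n) = (if m = n then 1 else 0)"
  using u by (simp add: onb_def)

lemma onb_complete: "(\<And>n. cinner (u n) x = 0) \<Longrightarrow> x = 0"
  using u by (simp add: onb_def)

lemma cinner_onb_sum:
  "finite F \<Longrightarrow> cinner (u k) (\<Sum>n\<in>F. cscale (a n) (u n)) = (if k \<in> F then a k else 0)"
  by (simp add: cinner_sum_right cinner_cscale_right cinner_onb if_distrib cong: if_cong)

lemma norm_onb_sum:
  assumes "finite F"
  shows "norm (\<Sum>n\<in>F. cscale (a n) (u n)) ^ 2 = (\<Sum>n\<in>F. cmod (a n) ^ 2)"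
proof -
  have "complex_of_real (norm (\<Sum>n\<in>F. cscale (a n) (u n)) ^ 2)
      = cinner (\<Sum>n\<in>F. cscale (a n) (u n)) (\<Sum>n\<in>F. cscale (a n) (u n))"
    by (simp add: cinner_self)
  also have "\<dots> = (\<Sum>n\<in>F. cnj (a n) * cinner (u n) (\<Sum>m\<in>F. cscale (a m) (u m)))"
    by (simp add: cinner_sum_left cinner_cscale_left)
  also have "\<dots> = (\<Sum>n\<in>F. complex_of_real (cmod (a n) ^ 2))"
    using assms by (intro sum.cong) (simp_all add: cinner_onb_sum cnj_mult_self)
  finally show ?thesis
    by (simp only: of_real_sum[symmetric] of_real_eq_iff)
qed

lemma bessel_inequality: "(\<Sum>n<N. cmod (cinner (u n) x) ^ 2) \<le> norm x ^ 2"
proof -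
  define c where "c n = cinner (u n) x" for n
  define p where "p = (\<Sum>n<N. cscale (c n) (u n))"
  define s where "s = (\<Sum>n<N. cmod (c n) ^ 2)"
  have px: "Re (cinner p x) = s"
    by (simp add: p_def s_def cinner_sum_left cinner_cscale_left c_def cnj_mult_self)
  then have xp: "Re (cinner x p) = s"
    by (subst cinner_commute) simp
  have pp: "Re (cinner p p) = s"
    using norm_onb_sum[of "{..<N}" c] by (simp add: p_def s_def norm_sq_eq_Re_cinner)
  have "norm (x - p) ^ 2 = norm x ^ 2 - s"
    by (simp add: norm_sq_eq_Re_cinner cinner_diff_left cinner_diff_right px xp pp)
  then have "0 \<le> norm x ^ 2 - s"
    by (metis zero_le_power2)
  then show ?thesis
    by (simp add: s_def c_def)
qed

lemma summable_bessel: "summable (\<lambda>n. cmod (cinner (u n) x) ^ 2)"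
  by (rule summableI_nonneg_bounded[where x="norm x ^ 2"]) (use bessel_inequality in auto)

lemma summable_onb_series:
  assumes "summable (\<lambda>n. cmod (a n) ^ 2)"
  shows "summable (\<lambda>n. cscale (a n) (u n))"
  by (rule summable_if_norm_sum_sq_le[OF assms]) (simp add: norm_onb_sum)

lemma cinner_onb_series:
  assumes "summable (\<lambda>n. cscale (a n) (u n))"
  shows "cinner (u k) (\<Sum>n. cscale (a n) (u n)) = a k"
proof -
  have "(\<lambda>n. cinner (u k) (cscale (a n) (u n))) sums cinner (u k) (\<Sum>n. cscale (a n) (u n))"
    by (rule sums_cinner_right[OF summable_sums[OF assms]])
  moreover have "(\<lambda>n. cinner (u k) (cscale (a n) (u n))) = (\<lambda>n. if n = k then a n else 0)"
    by (auto simp: cinner_cscale_right cinner_onb)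
  ultimately have "(\<lambda>n. if n = k then a n else 0) sums cinner (u k) (\<Sum>n. cscale (a n) (u n))"
    by simp
  then show ?thesis
    using sums_single[of k a] by (rule sums_unique2)
qed

lemma onb_expansion: "(\<lambda>n. cscale (cinner (u n) x) (u n)) sums x"
proof -
  have summable: "summable (\<lambda>n. cscale (cinner (u n) x) (u n))"
    by (rule summable_onb_series[OF summable_bessel])
  define y where "y = (\<Sum>n. cscale (cinner (u n) x) (u n))"
  have "cinner (u k) (x - y) = 0" for k
    by (simp add: y_def cinner_diff_right cinner_onb_series[OF summable])
  then have "x = y"
    using onb_complete by fastforce
  moreover have "(\<lambda>n. cscale (cinner (u n) x) (u n)) sums y"
    unfolding y_def by (rule summable_sums[OF summable])
  ultimately show ?thesis
    by (simp only:)
qed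

lemma parseval: "(\<lambda>n. cinner x (u n) * cinner (u n) y) sums cinner x y"
proof -
  have "(\<lambda>n. cinner x (cscale (cinner (u n) y) (u n))) sums cinner x y"
    by (rule sums_cinner_right[OF onb_expansion])
  then show ?thesis
    by (simp add: cinner_cscale_right ac_simps)
qed

lemma parseval_norm: "(\<lambda>n. cmod (cinner (u n) x) ^ 2) sums (norm x ^ 2)"
proof -
  have "(\<lambda>n. complex_of_real (cmod (cinner (u n) x) ^ 2)) sums complex_of_real (norm x ^ 2)"
    using parseval[of x x] by (simp add: cinner_commute[of x "u _"] cinner_self cnj_mult_self)
  then show ?thesis
    by (simp only: sums_of_real_iff)
qed

end


section \<open>Matrices of contractions\<close>

text \<open>The entry \<open>k n m\<close> is the \<open>m\<close>-th coordinate of the image of the \<open>n\<close>-th basis vector.\<close>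

definition contraction_matrix :: "(nat \<Rightarrow> nat \<Rightarrow> complex) \<Rightarrow> bool" where
  "contraction_matrix k \<longleftrightarrow>
    (\<forall>c N M. (\<Sum>m<M. cmod (\<Sum>n<N. c n * k n m) ^ 2) \<le> (\<Sum>n<N. cmod (c n) ^ 2))"

definition matrix_col :: "(nat \<Rightarrow> ell2) \<Rightarrow> (nat \<Rightarrow> nat \<Rightarrow> complex) \<Rightarrow> nat \<Rightarrow> ell2" where
  "matrix_col v k n = (\<Sum>m. cscale (k n m) (v m))"

definition matrix_op ::
  "(nat \<Rightarrow> ell2) \<Rightarrow> (nat \<Rightarrow> ell2) \<Rightarrow> (nat \<Rightarrow> nat \<Rightarrow> complex) \<Rightarrow> ell2 \<Rightarrow> ell2" where
  "matrix_op u v k x = (\<Sum>n. cscale (cinner (u n) x) (matrix_col v k n))"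

lemma contraction_matrixD:
  assumes "contraction_matrix k" "finite F"
  shows "(\<Sum>m<M. cmod (\<Sum>n\<in>F. c n * k n m) ^ 2) \<le> (\<Sum>n\<in>F. cmod (c n) ^ 2)"
proof -
  obtain N where N: "F \<subseteq> {..<N}"
    using assms(2) by (meson finite_nat_iff_bounded subset_eq lessThan_iff)
  define c' where "c' n = (if n \<in> F then c n else 0)" for n
  have "(\<Sum>n<N. c' n * k n m) = (\<Sum>n\<in>F. c' n * k n m)" for m
    by (rule sum.mono_neutral_right) (use N in \<open>auto simp: c'_def\<close>)
  moreover have "(\<Sum>n<N. cmod (c' n) ^ 2) = (\<Sum>n\<in>F. cmod (c' n) ^ 2)"
    by (rule sum.mono_neutral_right) (use N in \<open>auto simp: c'_def\<close>)
  moreover have "(\<Sum>m<M. cmod (\<Sum>n<N. c' n * k n m) ^ 2) \<le> (\<Sum>n<N. cmod (c' n) ^ 2)"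
    using assms(1) by (simp add: contraction_matrix_def)
  ultimately show ?thesis
    by (simp add: c'_def)
qed

lemma le_sq_if_le_sqrt_mult:
  fixes s b :: real
  assumes "0 \<le> s" "0 \<le> b" "s \<le> sqrt s * b"
  shows "s \<le> b ^ 2"
proof (cases "s = 0")
  case False
  then have "0 < sqrt s"
    using assms(1) by simp
  moreover have "sqrt s * sqrt s \<le> sqrt s * b"
    using assms(1,3) by simp
  ultimately have "sqrt s \<le> b"
    by (rule mult_le_cancel_left_pos[THEN iffD1])
  then have "sqrt s ^ 2 \<le> b ^ 2"
    by (rule power_mono) (simp add: assms(1))
  then show ?thesis
    using assms(1) by simp
qed simp

context
  fixes u v :: "nat \<Rightarrow> ell2" and k :: "nat \<Rightarrow> nat \<Rightarrow> complex"
  assumes u: "onb u" and v: "onb v" and k: "contraction_matrix k"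
begin

lemma summable_matrix_row: "summable (\<lambda>m. cmod (k n m) ^ 2)"
proof (rule summableI_nonneg_bounded[where x=1])
  fix M
  show "(\<Sum>m<M. cmod (k n m) ^ 2) \<le> 1"
    using contraction_matrixD[OF k, where F="{n}" and c="\<lambda>_. 1"] by simp
qed simp

lemma cinner_matrix_col: "cinner (v m) (matrix_col v k n) = k n m"
  unfolding matrix_col_def
  by (rule cinner_onb_series[OF v summable_onb_series[OF v summable_matrix_row]])

lemma sums_cinner_matrix_col: "(\<lambda>m. cnj (k n m) * cinner (v m) y) sums cinner (matrix_col v k n) y"
proof -
  have "(\<lambda>m. cinner (cscale (k n m) (v m)) y) sums cinner (matrix_col v k n) y"
    unfolding matrix_col_def
    by (rule sums_cinner_left[OF summable_sums[OF summable_onb_series[OF v summable_matrix_row]]])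
  then show ?thesis
    by (simp add: cinner_cscale_left)
qed

lemma cinner_sum_matrix_col:
  "cinner (v m) (\<Sum>n\<in>F. cscale (c n) (matrix_col v k n)) = (\<Sum>n\<in>F. c n * k n m)"
  by (simp add: cinner_sum_right cinner_cscale_right cinner_matrix_col)

lemma norm_sum_matrix_col_le:
  assumes "finite F"
  shows "norm (\<Sum>n\<in>F. cscale (c n) (matrix_col v k n)) ^ 2 \<le> (\<Sum>n\<in>F. cmod (c n) ^ 2)"
proof -
  have "(\<lambda>m. cmod (\<Sum>n\<in>F. c n * k n m) ^ 2) sums (norm (\<Sum>n\<in>F. cscale (c n) (matrix_col v k n)) ^ 2)"
    using parseval_norm[OF v, of "\<Sum>n\<in>F. cscale (c n) (matrix_col v k n)"]
    by (simp add: cinner_sum_matrix_col)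
  then have "norm (\<Sum>n\<in>F. cscale (c n) (matrix_col v k n)) ^ 2 = (\<Sum>m. cmod (\<Sum>n\<in>F. c n * k n m) ^ 2)"
    and "summable (\<lambda>m. cmod (\<Sum>n\<in>F. c n * k n m) ^ 2)"
    by (simp_all add: sums_iff)
  with contraction_matrixD[OF k assms] show ?thesis
    by (simp add: suminf_le_const)
qed

lemma matrix_op_sums: "(\<lambda>n. cscale (cinner (u n) x) (matrix_col v k n)) sums matrix_op u v k x"
proof -
  have "summable (\<lambda>n. cscale (cinner (u n) x) (matrix_col v k n))"
    using summable_bessel[OF u, of x] by (rule summable_if_norm_sum_sq_le) (simp add: norm_sum_matrix_col_le)
  then show ?thesis
    unfolding matrix_op_def by (rule summable_sums)
qed

lemma norm_matrix_op_le: "norm (matrix_op u v k x) \<le> norm x"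
proof (rule LIMSEQ_le_const2)
  show "(\<lambda>N. norm (\<Sum>n<N. cscale (cinner (u n) x) (matrix_col v k n))) \<longlonglongrightarrow> norm (matrix_op u v k x)"
    using matrix_op_sums[unfolded sums_def] by (rule tendsto_norm)
  have "norm (\<Sum>n<N. cscale (cinner (u n) x) (matrix_col v k n)) ^ 2 \<le> norm x ^ 2" for N
    using norm_sum_matrix_col_le[where F="{..<N}"] bessel_inequality[OF u, where N=N and x=x]
    by (meson finite_lessThan order_trans)
  then show "\<exists>N. \<forall>n\<ge>N. norm (\<Sum>n<n. cscale (cinner (u n) x) (matrix_col v k n)) \<le> norm x"
    by (meson norm_ge_zero power2_le_imp_le)
qed

lemma sums_cinner_matrix_op:
  "(\<lambda>n. cinner (u n) x * k n m) sums cinner (v m) (matrix_op u v k x)"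
  using sums_cinner_right[OF matrix_op_sums[of x], of "v m"]
  by (simp add: cinner_cscale_right cinner_matrix_col)

lemma sums_cinner_matrix_op_left:
  "(\<lambda>n. cnj (cinner (u n) x) * cinner (matrix_col v k n) y) sums cinner (matrix_op u v k x) y"
  using sums_cinner_left[OF matrix_op_sums[of x], of y] by (simp add: cinner_cscale_left)

lemma matrix_op_add: "matrix_op u v k (x + y) = matrix_op u v k x + matrix_op u v k y"
proof -
  have "(\<lambda>n. cscale (cinner (u n) (x + y)) (matrix_col v k n)) sums (matrix_op u v k x + matrix_op u v k y)"
    using sums_add[OF matrix_op_sums matrix_op_sums] by (simp add: cinner_add_right cscale_add_left)
  then show ?thesis
    using matrix_op_sums sums_unique2 by blast
qed

lemma matrix_op_cscale: "matrix_op u v k (cscale a x) = cscale a (matrix_op u v k x)"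
proof -
  have "(\<lambda>n. cscale (cinner (u n) (cscale a x)) (matrix_col v k n)) sums cscale a (matrix_op u v k x)"
    using sums_cscale[OF matrix_op_sums] by (simp add: cinner_cscale_right cscale_cscale)
  then show ?thesis
    using matrix_op_sums sums_unique2 by blast
qed

lemma matrix_op_onb_sum:
  assumes "finite F"
  shows "matrix_op u v k (\<Sum>n\<in>F. cscale (c n) (u n)) = (\<Sum>n\<in>F. cscale (c n) (matrix_col v k n))"
proof -
  have "(\<lambda>n. cscale (cinner (u n) (\<Sum>j\<in>F. cscale (c j) (u j))) (matrix_col v k n))
      = (\<lambda>n. if n \<in> F then cscale (c n) (matrix_col v k n) else 0)"
    using assms by (auto simp: cinner_onb_sum[OF u])
  then have "(\<lambda>n. cscale (cinner (u n) (\<Sum>j\<in>F. cscale (c j) (u j))) (matrix_col v k n))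
      sums (\<Sum>n\<in>F. cscale (c n) (matrix_col v k n))"
    using sums_If_finite_set[OF assms] by simp
  then show ?thesis
    using matrix_op_sums sums_unique2 by blast
qed

lemma cinner_matrix_op_onb: "cinner (v m) (matrix_op u v k (u n)) = k n m"
  using matrix_op_onb_sum[of "{n}" "\<lambda>_. 1"] by (simp add: cinner_matrix_col)

text \<open>Testing \<open>matrix_op\<close> against finite combinations \<open>y\<close> of the \<open>v m\<close> yields
  \<open>s \<le> sqrt s * \<parallel>y\<parallel>\<close> for the quantity \<open>s\<close> to be bounded.\<close>

lemma contraction_matrix_conj_transpose: "contraction_matrix (\<lambda>m n. cnj (k n m))"
  unfolding contraction_matrix_def
proof (intro allI)
  fix d :: "nat \<Rightarrow> complex" and M N :: nat
  define y where "y = (\<Sum>m<M. cscale (d m) (v m))"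
  define b where "b n = (\<Sum>m<M. d m * cnj (k n m))" for n
  have b: "cinner (matrix_col v k n) y = b n" for n
  proof -
    have "(\<lambda>m. cnj (k n m) * cinner (v m) y) = (\<lambda>m. if m \<in> {..<M} then d m * cnj (k n m) else 0)"
      by (auto simp: y_def cinner_onb_sum[OF v])
    then have "(\<lambda>m. cnj (k n m) * cinner (v m) y) sums b n"
      using sums_If_finite_set[of "{..<M}" "\<lambda>m. d m * cnj (k n m)"] by (simp add: b_def)
    then show ?thesis
      by (rule sums_unique2[OF sums_cinner_matrix_col])
  qed
  define x where "x = (\<Sum>n<N. cscale (b n) (u n))"
  define s where "s = (\<Sum>n<N. cmod (b n) ^ 2)"
  have s_nonneg: "0 \<le> s"
    by (simp add: s_def sum_nonneg)
  have "cinner (matrix_op u v k x) y = complex_of_real s"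
    unfolding s_def of_real_sum
    by (simp add: x_def matrix_op_onb_sum cinner_sum_left cinner_cscale_left b cnj_mult_self)
  then have "s = cmod (cinner (matrix_op u v k x) y)"
    using s_nonneg by simp
  also have "\<dots> \<le> norm (matrix_op u v k x) * norm y"
    by (rule norm_cinner_le)
  also have "\<dots> \<le> norm x * norm y"
    by (rule mult_right_mono[OF norm_matrix_op_le]) simp
  also have "norm x = sqrt s"
    using norm_onb_sum[OF u, of "{..<N}" b] by (simp add: x_def s_def real_sqrt_unique)
  finally have "s \<le> norm y ^ 2"
    by (rule le_sq_if_le_sqrt_mult[OF s_nonneg norm_ge_zero])
  also have "norm y ^ 2 = (\<Sum>m<M. cmod (d m) ^ 2)"
    using norm_onb_sum[OF v, of "{..<M}" d] by (simp add: y_def)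
  finally show "(\<Sum>n<N. cmod (\<Sum>m<M. d m * cnj (k n m)) ^ 2) \<le> (\<Sum>m<M. cmod (d m) ^ 2)"
    by (simp add: s_def b_def)
qed

end

lemma cinner_matrix_op_adjoint:
  assumes u: "onb u" and v: "onb v" and k: "contraction_matrix k"
  shows "cinner x (matrix_op v u (\<lambda>m n. cnj (k n m)) y) = cinner (matrix_op u v k x) y"
proof -
  let ?A = "matrix_op v u (\<lambda>m n. cnj (k n m)) y"
  have "(\<lambda>m. cnj (k n m) * cinner (v m) y) sums cinner (u n) ?A" for n
    using sums_cinner_matrix_op[OF v u contraction_matrix_conj_transpose[OF u v k]]
    by (simp add: mult.commute)
  then have "cinner (u n) ?A = cinner (matrix_col v k n) y" for n
    using sums_cinner_matrix_col[OF u v k] by (rule sums_unique2)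
  then have "(\<lambda>n. cnj (cinner (u n) x) * cinner (matrix_col v k n) y) sums cinner x ?A"
    using parseval[OF u, of x ?A] by (simp add: cinner_commute[of x "u _"])
  then show ?thesis
    using sums_cinner_matrix_op_left[OF u v k] sums_unique2 by blast
qed


section \<open>Positive operators and the trace\<close>

definition bounded_clinear :: "(ell2 \<Rightarrow> ell2) \<Rightarrow> bool" where
  "bounded_clinear L \<longleftrightarrow> bounded_linear L \<and> (\<forall>a x. L (cscale a x) = cscale a (L x))"

lemma bounded_linear_bounded_clinear: "bounded_clinear L \<Longrightarrow> bounded_linear L"
  by (simp add: bounded_clinear_def)

lemma linear_bounded_clinear: "bounded_clinear L \<Longrightarrow> linear L"
  by (simp add: bounded_clinear_def bounded_linear.linear)

lemma bounded_clinear_cscale: "bounded_clinear L \<Longrightarrow> L (cscale a x) = cscale a (L x)"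
  by (simp add: bounded_clinear_def)

lemma bounded_clinear_matrix_op:
  assumes "onb u" "onb v" "contraction_matrix k"
  shows "bounded_clinear (matrix_op u v k)"
proof -
  have "bounded_linear (matrix_op u v k)"
  proof (rule bounded_linear_intro)
    show "norm (matrix_op u v k x) \<le> norm x * 1" for x
      using norm_matrix_op_le[OF assms] by simp
  qed (simp_all add: matrix_op_add[OF assms] scaleR_ell2_eq_cscale matrix_op_cscale[OF assms])
  then show ?thesis
    by (simp add: bounded_clinear_def matrix_op_cscale[OF assms])
qed

lemma Re_cinner_nonneg_if_nonneg_on_onb_span:
  assumes v: "onb v" and L: "bounded_linear L"
    and span: "\<And>M d. 0 \<le> Re (cinner (\<Sum>m<M. cscale (d m) (v m)) (L (\<Sum>m<M. cscale (d m) (v m))))"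
  shows "0 \<le> Re (cinner x (L x))"
proof (rule LIMSEQ_le_const)
  define P where "P n = (\<Sum>m<n. cscale (cinner (v m) x) (v m))" for n
  have "P \<longlonglongrightarrow> x"
    using onb_expansion[OF v, of x] unfolding sums_def P_def .
  then have "(\<lambda>n. cinner (P n) (L (P n))) \<longlonglongrightarrow> cinner x (L x)"
    by (intro bounded_bilinear.tendsto[OF bounded_bilinear_cinner] bounded_linear.tendsto[OF L])
  then show "(\<lambda>n. Re (cinner (P n) (L (P n)))) \<longlonglongrightarrow> Re (cinner x (L x))"
    by (rule tendsto_Re)
  show "\<exists>N. \<forall>n\<ge>N. 0 \<le> Re (cinner (P n) (L (P n)))"
    by (simp add: P_def span)
qed

definition onb_proj :: "(nat \<Rightarrow> ell2) \<Rightarrow> nat \<Rightarrow> ell2 \<Rightarrow> ell2" where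
  "onb_proj v M x = (\<Sum>m<M. cscale (cinner (v m) x) (v m))"

lemma cinner_onb_proj_left:
  "cinner (onb_proj v M x) y = (\<Sum>m<M. cinner x (v m) * cinner (v m) y)"
  by (simp add: onb_proj_def cinner_sum_left cinner_cscale_left cinner_commute[of x])

context
  fixes u :: "nat \<Rightarrow> ell2" and L :: "ell2 \<Rightarrow> ell2"
  assumes u: "onb u" and L: "bounded_clinear L"
begin

lemma sums_cinner_onb_expansion: "(\<lambda>n. cinner (u n) y * cinner z (L (u n))) sums cinner z (L y)"
proof -
  have "(\<lambda>n. L (cscale (cinner (u n) y) (u n))) sums L y"
    by (rule bounded_linear.sums[OF bounded_linear_bounded_clinear[OF L] onb_expansion[OF u]])
  from sums_cinner_right[OF this, of z] show ?thesis
    by (simp add: bounded_clinear_cscale[OF L] cinner_cscale_right)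
qed

lemma sums_trace_onb_proj_left:
  "(\<lambda>n. cinner (onb_proj v M (u n)) (L (u n))) sums (\<Sum>m<M. cinner (v m) (L (v m)))"
  unfolding cinner_onb_proj_left by (intro sums_sum sums_cinner_onb_expansion)

lemma sums_trace_onb_proj_right:
  "(\<lambda>n. cinner (u n) (L (onb_proj v M (u n)))) sums (\<Sum>m<M. cinner (v m) (L (v m)))"
proof -
  have "cinner (u n) (L (onb_proj v M (u n))) = (\<Sum>m<M. cinner (v m) (u n) * cinner (u n) (L (v m)))" for n
    by (simp add: onb_proj_def linear_sum[OF linear_bounded_clinear[OF L]] bounded_clinear_cscale[OF L]
        cinner_sum_right cinner_cscale_right)
  then show ?thesis
    using parseval[OF u] by (simp add: sums_sum)
qed

lemma sums_trace_onb_proj: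
  assumes v: "onb v"
  shows "(\<lambda>n. cinner (onb_proj v M (u n)) (L (onb_proj v M (u n)))) sums (\<Sum>m<M. cinner (v m) (L (v m)))"
proof -
  have "(\<lambda>n. cinner (v m') (u n) * cinner (u n) (v m) * cinner (v m) (L (v m')))
      sums (if m' = m then cinner (v m) (L (v m')) else 0)" for m m'
    using sums_mult2[OF parseval[OF u, of "v m'" "v m"], of "cinner (v m) (L (v m'))"]
    by (cases "m' = m") (simp_all add: cinner_onb[OF v])
  then have "(\<lambda>n. \<Sum>m<M. \<Sum>m'<M. cinner (v m') (u n) * cinner (u n) (v m) * cinner (v m) (L (v m')))
      sums (\<Sum>m<M. \<Sum>m'<M. if m' = m then cinner (v m) (L (v m')) else 0)"
    by (intro sums_sum)
  moreover have "cinner (onb_proj v M (u n)) (L (onb_proj v M (u n)))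
      = (\<Sum>m<M. \<Sum>m'<M. cinner (v m') (u n) * cinner (u n) (v m) * cinner (v m) (L (v m')))" for n
  proof -
    have "cinner (v m) (L (onb_proj v M (u n))) = (\<Sum>m'<M. cinner (v m') (u n) * cinner (v m) (L (v m')))"
      for m by (simp add: onb_proj_def linear_sum[OF linear_bounded_clinear[OF L]] bounded_clinear_cscale[OF L]
          cinner_sum_right cinner_cscale_right)
    then show ?thesis
      unfolding cinner_onb_proj_left
      by (simp add: sum_distrib_left ac_simps)
  qed
  ultimately show ?thesis
    by simp
qed

text \<open>With \<open>P = onb_proj v M\<close>, the difference is the trace of \<open>(1 - P) L (1 - P)\<close>, a sum of
  nonnegative terms.\<close>

lemma sum_diagonal_le_trace:
  assumes v: "onb v" and pos: "\<And>x. 0 \<le> Re (cinner x (L x))"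
    and trace: "(\<lambda>n. cinner (u n) (L (u n))) sums t"
  shows "(\<Sum>m<M. Re (cinner (v m) (L (v m)))) \<le> Re t"
proof -
  define P where "P = onb_proj v M"
  define s where "s = (\<Sum>m<M. cinner (v m) (L (v m)))"
  have "cinner (u n - P n') (L (u n - P n'))
      = cinner (u n) (L (u n)) - cinner (u n) (L (P n')) - cinner (P n') (L (u n)) + cinner (P n') (L (P n'))"
    for n n' by (simp add: linear_diff[OF linear_bounded_clinear[OF L]] cinner_diff_left cinner_diff_right)
  then have "(\<lambda>n. cinner (u n - P (u n)) (L (u n - P (u n)))) sums (t - s - s + s)"
    using sums_add[OF sums_diff[OF sums_diff[OF trace sums_trace_onb_proj_right[where v=v and M=M]]
          sums_trace_onb_proj_left[where v=v and M=M]] sums_trace_onb_proj[OF v, where M=M]]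
    by (simp add: P_def s_def)
  then have complement: "(\<lambda>n. Re (cinner (u n - P (u n)) (L (u n - P (u n))))) sums Re (t - s)"
    using sums_Re by fastforce
  have "0 \<le> (\<Sum>n. Re (cinner (u n - P (u n)) (L (u n - P (u n)))))"
    by (rule suminf_nonneg[OF sums_summable[OF complement] pos])
  then show ?thesis
    using sums_unique[OF complement] by (simp add: s_def)
qed

end

lemma Rep_ell2_sum_cscale:
  "Rep_ell2 (\<Sum>n\<in>F. cscale (c n) (u n)) = (\<lambda>i. \<Sum>n\<in>F. c n * Rep_ell2 (u n) i)"
  by (induction F rule: infinite_finite_induct) (auto simp: Rep_ell2_add Rep_ell2_cscale Rep_ell2_zero)

lemma Abs_ell2_lincomb:
  assumes "x \<in> l2" "y \<in> l2"
  shows "Abs_ell2 (\<lambda>i. a * x i + b * y i) = cscale a (Abs_ell2 x) + cscale b (Abs_ell2 y)"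
  by (rule ell2_eqI) (simp add: Rep_ell2_add Rep_ell2_cscale assms l2_add l2_scale)

lemma fspan_sum: "(\<lambda>i. \<Sum>n<N. c n * u n i) \<in> fspan u"
  unfolding fspan_def by blast

lemma fspan_basis: "u n \<in> fspan u"
proof -
  have "u n = (\<lambda>i. \<Sum>j<Suc n. (if j = n then 1 else 0) * u j i)"
    by (simp add: if_distrib cong: if_cong)
  then show ?thesis
    by (metis fspan_sum)
qed

lemma fspan_l2:
  assumes "\<And>n. u n \<in> l2" and "x \<in> fspan u"
  shows "x \<in> l2"
proof -
  obtain c N where "x = (\<lambda>i. \<Sum>n<N. c n * u n i)"
    using assms(2) by (auto simp: fspan_def)
  also have "\<dots> = Rep_ell2 (\<Sum>n<N. cscale (c n) (Abs_ell2 (u n)))"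
    by (simp add: Rep_ell2_sum_cscale assms(1))
  finally show ?thesis
    using Rep_ell2 by simp
qed

definition ell2_op :: "(vec \<Rightarrow> vec) \<Rightarrow> ell2 \<Rightarrow> ell2" where
  "ell2_op T x = Abs_ell2 (T (Rep_ell2 x))"

definition vec_op :: "(ell2 \<Rightarrow> ell2) \<Rightarrow> vec \<Rightarrow> vec" where
  "vec_op L x = Rep_ell2 (L (Abs_ell2 x))"

lemma Rep_ell2_ell2_op: "bdd_op T \<Longrightarrow> Rep_ell2 (ell2_op T x) = T (Rep_ell2 x)"
  by (simp add: ell2_op_def bdd_op_def Rep_ell2)

lemma bounded_clinear_ell2_op:
  assumes T: "bdd_op T"
  shows "bounded_clinear (ell2_op T)"
proof -
  have lin: "T (\<lambda>i. a * Rep_ell2 x i + b * Rep_ell2 y i) = (\<lambda>i. a * T (Rep_ell2 x) i + b * T (Rep_ell2 y) i)"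
    for a b x y
    using T by (simp add: bdd_op_def Rep_ell2)
  obtain C where C: "\<And>x. x \<in> l2 \<Longrightarrow> l2norm (T x) \<le> C * l2norm x"
    using T unfolding bdd_op_def by blast
  have add: "ell2_op T (x + y) = ell2_op T x + ell2_op T y" for x y
    using lin[of 1 x 1 y] by (intro ell2_eqI) (simp add: Rep_ell2_ell2_op[OF T] Rep_ell2_add)
  have cscale: "ell2_op T (cscale a x) = cscale a (ell2_op T x)" for a x
    using lin[of a x 0 x] by (intro ell2_eqI) (simp add: Rep_ell2_ell2_op[OF T] Rep_ell2_cscale)
  have "bounded_linear (ell2_op T)"
  proof (rule bounded_linear_intro[where f="ell2_op T", OF add])
    show "ell2_op T (r *\<^sub>R x) = r *\<^sub>R ell2_op T x" for r x
      by (simp add: scaleR_ell2_eq_cscale cscale)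
    show "norm (ell2_op T x) \<le> norm x * C" for x
      using C[OF Rep_ell2[of x]] by (simp add: norm_ell2_l2norm Rep_ell2_ell2_op[OF T] mult.commute)
  qed
  with cscale show ?thesis
    by (simp add: bounded_clinear_def)
qed

lemma bdd_op_vec_op:
  assumes L: "bounded_clinear L"
  shows "bdd_op (vec_op L)"
  unfolding bdd_op_def
proof (intro conjI ballI allI)
  show "vec_op L x \<in> l2" for x
    by (simp add: vec_op_def Rep_ell2)
  show "vec_op L (\<lambda>i. a * x i + b * y i) = (\<lambda>i. a * vec_op L x i + b * vec_op L y i)"
    if "x \<in> l2" "y \<in> l2" for x y a b
    by (simp add: vec_op_def Abs_ell2_lincomb that linear_add[OF linear_bounded_clinear[OF L]]
        bounded_clinear_cscale[OF L] Rep_ell2_add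
        Rep_ell2_cscale)
  obtain C where C: "\<And>x. norm (L x) \<le> norm x * C"
    using bounded_linear.bounded[OF bounded_linear_bounded_clinear[OF L]] by blast
  have "l2norm (vec_op L x) \<le> C * l2norm x" if "x \<in> l2" for x
    using C[of "Abs_ell2 x"] norm_ell2_l2norm[of "Abs_ell2 x"] norm_ell2_l2norm[of "L (Abs_ell2 x)"] that
    by (simp add: vec_op_def mult.commute)
  then show "\<exists>C. \<forall>x\<in>l2. l2norm (vec_op L x) \<le> C * l2norm x"
    by blast
qed

lemma ip_vec_op:
  "x \<in> l2 \<Longrightarrow> y \<in> l2 \<Longrightarrow> ip x (vec_op L y) = cinner (Abs_ell2 x) (L (Abs_ell2 y))"
  by (simp add: vec_op_def cinner_def)

lemma ip_vec_op_left:
  "x \<in> l2 \<Longrightarrow> y \<in> l2 \<Longrightarrow> ip (vec_op L x) y = cinner (L (Abs_ell2 x)) (Abs_ell2 y)"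
  by (simp add: vec_op_def cinner_def)

lemma trace_class_diagonal_sums:
  assumes "is_ONB e" "trace_class T"
  shows "(\<lambda>n. ip (e n) (T (e n))) sums op_trace e T"
proof -
  obtain B where B: "\<And>N u v. orthonormal_fam N u \<Longrightarrow> orthonormal_fam N v
      \<Longrightarrow> (\<Sum>i<N. cmod (ip (v i) (T (u i)))) \<le> B"
    using assms(2) unfolding trace_class_def by blast
  have fam: "orthonormal_fam N e" for N
    using assms(1) by (simp add: orthonormal_fam_def is_ONB_def)
  have "summable (\<lambda>n. cmod (ip (e n) (T (e n))))"
    by (rule summableI_nonneg_bounded[where x=B]) (simp_all add: B[OF fam fam])
  then have "summable (\<lambda>n. ip (e n) (T (e n)))"
    by (rule summable_norm_cancel)
  then show ?thesis
    unfolding op_trace_def by (rule summable_sums)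
qed


section \<open>Generalized operators\<close>

lemma gen_op_add_left:
  "gen_op e f K \<Longrightarrow> \<phi> \<in> fspan e \<Longrightarrow> \<psi> \<in> fspan e \<Longrightarrow> g \<in> fspan f \<Longrightarrow>
    K (\<lambda>i. a * \<phi> i + b * \<psi> i) g = a * K \<phi> g + b * K \<psi> g"
  by (simp add: gen_op_def)

lemma gen_op_add_right:
  "gen_op e f K \<Longrightarrow> \<phi> \<in> fspan e \<Longrightarrow> g \<in> fspan f \<Longrightarrow> h \<in> fspan f \<Longrightarrow>
    K \<phi> (\<lambda>i. a * g i + b * h i) = cnj a * K \<phi> g + cnj b * K \<phi> h"
  by (simp add: gen_op_def)

lemma gen_op_sum_left:
  assumes K: "gen_op e f K" and g: "g \<in> fspan f"
  shows "K (\<lambda>i. \<Sum>n<N. c n * e n i) g = (\<Sum>n<N. c n * K (e n) g)"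
proof (induction N)
  case 0
  show ?case
    using gen_op_add_left[OF K fspan_basis fspan_basis g, of 0 0 0 0] by simp
next
  case (Suc N)
  show ?case
    using gen_op_add_left[OF K fspan_sum fspan_basis g, of 1 c N "c N" N] Suc by simp
qed

lemma gen_op_sum_right:
  assumes K: "gen_op e f K" and \<phi>: "\<phi> \<in> fspan e"
  shows "K \<phi> (\<lambda>i. \<Sum>m<M. d m * f m i) = (\<Sum>m<M. cnj (d m) * K \<phi> (f m))"
proof (induction M)
  case 0
  show ?case
    using gen_op_add_right[OF K \<phi> fspan_basis fspan_basis, of 0 0 0 0] by simp
next
  case (Suc M)
  show ?case
    using gen_op_add_right[OF K \<phi> fspan_sum fspan_basis, of 1 d M "d M" M] Suc by simp
qed

lemma gen_op_eqI:
  assumes K1: "gen_op e f K1" and K2: "gen_op e f K2"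
    and basis: "\<And>n m. K1 (e n) (f m) = K2 (e n) (f m)"
    and \<phi>: "\<phi> \<in> fspan e" and g: "g \<in> fspan f"
  shows "K1 \<phi> g = K2 \<phi> g"
proof -
  obtain c N where c: "\<phi> = (\<lambda>i. \<Sum>n<N. c n * e n i)"
    using \<phi> by (auto simp: fspan_def)
  obtain d M where d: "g = (\<lambda>i. \<Sum>m<M. d m * f m i)"
    using g by (auto simp: fspan_def)
  have "K1 \<phi> g = (\<Sum>m<M. cnj (d m) * K1 \<phi> (f m))"
    unfolding d by (rule gen_op_sum_right[OF K1 \<phi>])
  also have "\<dots> = (\<Sum>m<M. cnj (d m) * K2 \<phi> (f m))"
    unfolding c by (simp add: gen_op_sum_left[OF K1 fspan_basis] gen_op_sum_left[OF K2 fspan_basis] basis)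
  also have "\<dots> = K2 \<phi> g"
    unfolding d by (rule gen_op_sum_right[OF K2 \<phi>, symmetric])
  finally show ?thesis .
qed

lemma gen_op_bdd_op:
  assumes e: "\<And>n. e n \<in> l2" and f: "\<And>n. f n \<in> l2" and B: "bdd_op B"
  shows "gen_op e f (\<lambda>\<phi> g. ip g (B \<phi>))"
proof -
  have B_l2: "x \<in> l2 \<Longrightarrow> B x \<in> l2"
    and B_lin: "x \<in> l2 \<Longrightarrow> y \<in> l2 \<Longrightarrow> B (\<lambda>i. a * x i + b * y i) = (\<lambda>i. a * B x i + b * B y i)"
    for x y a b
    using B by (simp_all add: bdd_op_def)
  have e_l2: "\<phi> \<in> fspan e \<Longrightarrow> \<phi> \<in> l2" and f_l2: "g \<in> fspan f \<Longrightarrow> g \<in> l2" for \<phi> g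
    by (simp_all add: fspan_l2[OF e] fspan_l2[OF f])
  show ?thesis
    unfolding gen_op_def
    by (simp add: e_l2 f_l2 B_l2 B_lin l2_scale ip_add_left ip_add_right ip_scale_left
        ip_scale_right)
qed


section \<open>The matrix of a Kraus operator is a contraction\<close>

lemma ip_onb_sum:
  assumes "is_ONB e"
  shows "ip (e k) (\<lambda>i. \<Sum>n<N. c n * e n i) = (if k < N then c k else 0)"
proof -
  have e_l2: "e n \<in> l2" for n
    using assms by (simp add: is_ONB_def)
  have "(\<lambda>i. \<Sum>n<N. c n * e n i) = Rep_ell2 (\<Sum>n<N. cscale (c n) (Abs_ell2 (e n)))"
    by (simp add: Rep_ell2_sum_cscale e_l2)
  then show ?thesis
    using cinner_onb_sum[OF onb_Abs_ell2[OF assms], of "{..<N}" k c]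
    by (simp add: cinner_def e_l2)
qed

lemma rank1_onb_sum:
  assumes "is_ONB e"
  shows "rank1 e (\<lambda>i. \<Sum>n<N. c n * e n i) (\<lambda>i. \<Sum>n<N. c n * e n i)
    = (\<lambda>k l. (if k < N then c k else 0) * cnj (if l < N then c l else 0))"
  by (simp add: rank1_def ip_onb_sum[OF assms])

lemma fin_supp_mat_rank1_onb_sum:
  assumes "is_ONB e"
  shows "fin_supp_mat (rank1 e (\<lambda>i. \<Sum>n<N. c n * e n i) (\<lambda>i. \<Sum>n<N. c n * e n i))"
proof -
  have "{(k, l). (if k < N then c k else 0) * cnj (if l < N then c l else 0) \<noteq> 0} \<subseteq> {..<N} \<times> {..<N}"
    by auto
  then show ?thesis
    unfolding fin_supp_mat_def rank1_onb_sum[OF assms] by (rule finite_subset) simp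
qed

lemma mat_trace_rank1_onb_sum:
  assumes "is_ONB e"
  shows "mat_trace (rank1 e (\<lambda>i. \<Sum>n<N. c n * e n i) (\<lambda>i. \<Sum>n<N. c n * e n i))
    = of_real (\<Sum>n<N. cmod (c n) ^ 2)"
proof -
  have "mat_trace (rank1 e (\<lambda>i. \<Sum>n<N. c n * e n i) (\<lambda>i. \<Sum>n<N. c n * e n i))
      = infsum (\<lambda>k. (if k < N then c k else 0) * cnj (if k < N then c k else 0)) {..<N}"
    unfolding mat_trace_def rank1_onb_sum[OF assms] by (rule infsum_cong_neutral) auto
  then show ?thesis
    by (simp add: mult_cnj_self)
qed

lemma trace_class_diagonal_le_trace:
  assumes onb_e: "is_ONB e" and onb_f: "is_ONB f" and T: "trace_class T"
    and pos: "\<And>g. g \<in> fspan f \<Longrightarrow> 0 \<le> Re (ip g (T g))"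
  shows "(\<Sum>m<M. Re (ip (f m) (T (f m)))) \<le> Re (op_trace e T)"
proof -
  have e_l2: "e n \<in> l2" and f_l2: "f n \<in> l2" for n
    using onb_e onb_f by (simp_all add: is_ONB_def)
  have bdd: "bdd_op T"
    using T by (simp add: trace_class_def)
  define L where "L = ell2_op T"
  have L: "bounded_clinear L"
    unfolding L_def by (rule bounded_clinear_ell2_op[OF bdd])
  have L_ip: "cinner (Abs_ell2 x) (L (Abs_ell2 x)) = ip x (T x)" if "x \<in> l2" for x
    by (simp add: L_def cinner_def Rep_ell2_ell2_op[OF bdd] that)
  have "0 \<le> Re (cinner x (L x))" for x
  proof (rule Re_cinner_nonneg_if_nonneg_on_onb_span[OF onb_Abs_ell2[OF onb_f]])
    show "bounded_linear L"
      by (rule bounded_linear_bounded_clinear[OF L])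
    have "(\<Sum>m<M. cscale (d m) (Abs_ell2 (f m))) = Abs_ell2 (\<lambda>i. \<Sum>m<M. d m * f m i)" for M d
      by (simp add: Rep_ell2_inject[symmetric] Rep_ell2_sum_cscale f_l2 fspan_l2[OF f_l2 fspan_sum])
    then show "0 \<le> Re (cinner (\<Sum>m<M. cscale (d m) (Abs_ell2 (f m))) (L (\<Sum>m<M. cscale (d m) (Abs_ell2 (f m)))))"
      for M d using pos[OF fspan_sum] by (simp add: L_ip fspan_l2[OF f_l2 fspan_sum])
  qed
  moreover have "(\<lambda>n. cinner (Abs_ell2 (e n)) (L (Abs_ell2 (e n)))) sums op_trace e T"
    using trace_class_diagonal_sums[OF onb_e T] by (simp add: L_ip e_l2)
  ultimately show ?thesis
    using sum_diagonal_le_trace[OF onb_Abs_ell2[OF onb_e] L onb_Abs_ell2[OF onb_f]] by (simp add: L_ip f_l2)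
qed

lemma gen_op_contraction_matrix:
  fixes K :: "nat \<Rightarrow> vec \<Rightarrow> vec \<Rightarrow> complex"
    and Q :: "(nat \<Rightarrow> nat \<Rightarrow> complex) \<Rightarrow> vec \<Rightarrow> vec \<Rightarrow> complex"
  assumes onb_e: "is_ONB e" and onb_f: "is_ONB f" and K: "gen_op e f (K \<alpha>)" and \<alpha>: "\<alpha> \<in> A"
    and Q_repr: "\<forall>\<phi>\<in>fspan e. \<forall>\<phi>'\<in>fspan e. \<forall>g\<in>fspan f. \<forall>h\<in>fspan f.
                  ((\<lambda>\<alpha>. K \<alpha> \<phi> g * cnj (K \<alpha> \<phi>' h)) has_sum Q (rank1 e \<phi> \<phi>') g h) A"
    and Q_tp: "\<forall>c. fin_supp_mat c \<longrightarrow>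
                  (\<exists>T. trace_class T
                     \<and> (\<forall>g\<in>fspan f. \<forall>h\<in>fspan f. ip g (T h) = Q c g h)
                     \<and> op_trace e T = mat_trace c)"
  shows "contraction_matrix (\<lambda>n m. K \<alpha> (e n) (f m))"
  unfolding contraction_matrix_def
proof (intro allI)
  fix c :: "nat \<Rightarrow> complex" and N M :: nat
  define \<phi> where "\<phi> = (\<lambda>i. \<Sum>n<N. c n * e n i)"
  have \<phi>_span: "\<phi> \<in> fspan e"
    unfolding \<phi>_def by (rule fspan_sum)
  obtain T where T: "trace_class T" and Q_T: "\<forall>g\<in>fspan f. \<forall>h\<in>fspan f. ip g (T h) = Q (rank1 e \<phi> \<phi>) g h"
    and trace: "op_trace e T = mat_trace (rank1 e \<phi> \<phi>)"
    using Q_tp fin_supp_mat_rank1_onb_sum[OF onb_e] unfolding \<phi>_def by blast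
  have repr: "((\<lambda>a. cmod (K a \<phi> g) ^ 2) has_sum Re (ip g (T g))) A" if "g \<in> fspan f" for g
  proof -
    have "((\<lambda>a. K a \<phi> g * cnj (K a \<phi> g)) has_sum ip g (T g)) A"
      using Q_repr Q_T that \<phi>_span by simp
    from has_sum_Re[OF this] show ?thesis
      by (simp add: mult_cnj_self)
  qed
  have diagonal: "cmod (K \<alpha> \<phi> (f m)) ^ 2 \<le> Re (ip (f m) (T (f m)))" for m
  proof (rule has_sum_mono_neutral[OF _ repr[OF fspan_basis]])
    show "((\<lambda>a. cmod (K a \<phi> (f m)) ^ 2) has_sum cmod (K \<alpha> \<phi> (f m)) ^ 2) {\<alpha>}"
      using has_sum_finite[of "{\<alpha>}" "\<lambda>a. cmod (K a \<phi> (f m)) ^ 2"] by simp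
  qed (use \<alpha> in simp_all)
  have "(\<Sum>m<M. cmod (K \<alpha> \<phi> (f m)) ^ 2) \<le> (\<Sum>m<M. Re (ip (f m) (T (f m))))"
    by (rule sum_mono[OF diagonal])
  also have "\<dots> \<le> Re (op_trace e T)"
  proof (rule trace_class_diagonal_le_trace[OF onb_e onb_f T])
    show "0 \<le> Re (ip g (T g))" if "g \<in> fspan f" for g
      by (rule has_sum_nonneg[OF repr[OF that]]) simp
  qed
  also have "\<dots> = (\<Sum>n<N. cmod (c n) ^ 2)"
    by (simp add: trace \<phi>_def mat_trace_rank1_onb_sum[OF onb_e])
  finally show "(\<Sum>m<M. cmod (\<Sum>n<N. c n * K \<alpha> (e n) (f m)) ^ 2) \<le> (\<Sum>n<N. cmod (c n) ^ 2)"
    by (simp add: \<phi>_def gen_op_sum_left[OF K fspan_basis])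
qed


lemma contraction_matrix_bdd_op:
  assumes onb_e: "is_ONB e" and onb_f: "is_ONB f" and k: "contraction_matrix k"
  shows "\<exists>B Badj. bdd_op B \<and> bdd_op Badj \<and> (\<forall>x\<in>l2. \<forall>y\<in>l2. ip x (Badj y) = ip (B x) y)
    \<and> (\<forall>n m. ip (f m) (B (e n)) = k n m)"
proof -
  let ?u = "\<lambda>n. Abs_ell2 (e n)" and ?v = "\<lambda>n. Abs_ell2 (f n)"
  have u: "onb ?u" and v: "onb ?v"
    using onb_Abs_ell2 onb_e onb_f by blast+
  have e_l2: "e n \<in> l2" and f_l2: "f n \<in> l2" for n
    using onb_e onb_f by (simp_all add: is_ONB_def)
  define B where "B = vec_op (matrix_op ?u ?v k)"
  define Badj where "Badj = vec_op (matrix_op ?v ?u (\<lambda>m n. cnj (k n m)))"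
  have "bdd_op B" "bdd_op Badj"
    unfolding B_def Badj_def
    by (intro bdd_op_vec_op bounded_clinear_matrix_op u v k
        contraction_matrix_conj_transpose[OF u v k])+
  moreover have "ip x (Badj y) = ip (B x) y" if "x \<in> l2" "y \<in> l2" for x y
    by (simp add: B_def Badj_def ip_vec_op ip_vec_op_left that cinner_matrix_op_adjoint[OF u v k])
  moreover have "ip (f m) (B (e n)) = k n m" for n m
    by (simp add: B_def ip_vec_op e_l2 f_l2 cinner_matrix_op_onb[OF u v k])
  ultimately show ?thesis
    by blast
qed

theorem corollary6p5:
  fixes e f :: "nat \<Rightarrow> vec"
    and A :: "nat set"
    and K :: "nat \<Rightarrow> vec \<Rightarrow> vec \<Rightarrow> complex"
    and Q :: "(nat \<Rightarrow> nat \<Rightarrow> complex) \<Rightarrow> vec \<Rightarrow> vec \<Rightarrow> complex"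
  assumes onb_e: "is_ONB e" and onb_f: "is_ONB f"
    and genop: "\<forall>\<alpha>\<in>A. gen_op e f (K \<alpha>)"
    and Q_lin: "\<forall>c d a b g h. fin_supp_mat c \<and> fin_supp_mat d \<and> g \<in> fspan f \<and> h \<in> fspan f \<longrightarrow>
                  Q (\<lambda>k l. a * c k l + b * d k l) g h = a * Q c g h + b * Q d g h"
    and Q_sesq: "\<forall>c. fin_supp_mat c \<longrightarrow>
                  (\<forall>g\<in>fspan f. \<forall>g'\<in>fspan f. \<forall>h\<in>fspan f. \<forall>a b.
                     Q c (\<lambda>i. a * g i + b * g' i) h = cnj a * Q c g h + cnj b * Q c g' h
                   \<and> Q c h (\<lambda>i. a * g i + b * g' i) = a * Q c h g + b * Q c h g')"
    and Q_repr: "\<forall>\<phi>\<in>fspan e. \<forall>\<phi>'\<in>fspan e. \<forall>g\<in>fspan f. \<forall>h\<in>fspan f.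
                  ((\<lambda>\<alpha>. K \<alpha> \<phi> g * cnj (K \<alpha> \<phi>' h)) has_sum Q (rank1 e \<phi> \<phi>') g h) A"
    and Q_cp: "\<forall>(n::nat) \<phi> \<psi>. (\<forall>k<n. \<phi> k \<in> fspan e \<and> \<psi> k \<in> fspan f) \<longrightarrow>
                  (let s = (\<Sum>k<n. \<Sum>l<n. Q (rank1 e (\<phi> k) (\<phi> l)) (\<psi> k) (\<psi> l))
                   in Im s = 0 \<and> Re s \<ge> 0)"
    and Q_tp: "\<forall>c. fin_supp_mat c \<longrightarrow>
                  (\<exists>T. trace_class T
                     \<and> (\<forall>g\<in>fspan f. \<forall>h\<in>fspan f. ip g (T h) = Q c g h)
                     \<and> op_trace e T = mat_trace c)"
  shows "\<forall>\<alpha>\<in>A. \<exists>B Badj. bdd_op B \<and> bdd_op Badj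
            \<and> (\<forall>x\<in>l2. \<forall>y\<in>l2. ip x (Badj y) = ip (B x) y)
            \<and> (\<forall>\<phi>\<in>fspan e. \<forall>g\<in>fspan f. ip g (B \<phi>) = K \<alpha> \<phi> g)
            \<and> (\<forall>\<phi>\<in>fspan e. \<forall>g\<in>fspan f. ip \<phi> (Badj g) = cnj (K \<alpha> \<phi> g))"
proof
  fix \<alpha> assume \<alpha>: "\<alpha> \<in> A"
  have e_l2: "\<And>n. e n \<in> l2" and f_l2: "\<And>n. f n \<in> l2"
    using onb_e onb_f by (simp_all add: is_ONB_def)
  have K: "gen_op e f (K \<alpha>)"
    using genop \<alpha> by blast
  obtain B Badj where B: "bdd_op B" and Badj: "bdd_op Badj"
    and adjoint: "\<forall>x\<in>l2. \<forall>y\<in>l2. ip x (Badj y) = ip (B x) y"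
    and entries: "\<And>n m. ip (f m) (B (e n)) = K \<alpha> (e n) (f m)"
    using contraction_matrix_bdd_op[OF onb_e onb_f
        gen_op_contraction_matrix[OF onb_e onb_f K \<alpha> Q_repr Q_tp]] by blast
  have B_K: "ip g (B \<phi>) = K \<alpha> \<phi> g" if "\<phi> \<in> fspan e" "g \<in> fspan f" for \<phi> g
    using gen_op_eqI[OF gen_op_bdd_op[OF e_l2 f_l2 B] K entries that] .
  have "ip \<phi> (Badj g) = cnj (K \<alpha> \<phi> g)" if "\<phi> \<in> fspan e" "g \<in> fspan f" for \<phi> g
    using that adjoint ip_cnj[of g "B \<phi>"] B_K[OF that] fspan_l2[OF e_l2] fspan_l2[OF f_l2] B
    by (simp add: bdd_op_def)
  with B Badj adjoint B_K show "\<exists>B Badj. bdd_op B \<and> bdd_op Badj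
            \<and> (\<forall>x\<in>l2. \<forall>y\<in>l2. ip x (Badj y) = ip (B x) y)
            \<and> (\<forall>\<phi>\<in>fspan e. \<forall>g\<in>fspan f. ip g (B \<phi>) = K \<alpha> \<phi> g)
            \<and> (\<forall>\<phi>\<in>fspan e. \<forall>g\<in>fspan f. ip \<phi> (Badj g) = cnj (K \<alpha> \<phi> g))"
    by blast
qed

end
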